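(* Let $p$ be a prime and $b,c\in\mathbb{Q}_p$ with $|c|_p=1$ and $|b|_p<1$, and let $f(x)=\frac{x}{bx+c}$. Let $S_1(0)=\{x\in\mathbb{Q}_p:|x|_p=1\}$. For every $a\in\mathbb{Q}_p$ and every positive integer $l$ such that the ball $U_{p^{-l}}(a)=\{x\in\mathbb{Q}_p:|x-a|_p\le p^{-l}\}$ is contained in $S_1(0)$, we have $$f(U_{p^{-l}}(a))=U_{p^{-l}}(f(a)).$$
   Context: $\mathbb{Q}_p$ is the field of $p$-adic numbers with norm $|\cdot|_p$. *)

theory Defs
  imports Complex_Main "HOL-Computational_Algebra.Primes"
begin

text \<open>Since p varies, Q_p is a carrier set (depending on p) rather than a type.\<close>

definition rat_pval :: "nat \<Rightarrow> rat \<Rightarrow> int" where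
  "rat_pval p q = (case quotient_of q of (a, d) \<Rightarrow>
       int (multiplicity (int p) a) - int (multiplicity (int p) d))"

definition rat_pnorm :: "nat \<Rightarrow> rat \<Rightarrow> real" where
  "rat_pnorm p q = (if q = 0 then 0 else real p powr (- real_of_int (rat_pval p q)))"

definition p_cauchy :: "nat \<Rightarrow> (nat \<Rightarrow> rat) \<Rightarrow> bool" where
  "p_cauchy p X \<longleftrightarrow> (\<forall>e>0. \<exists>N. \<forall>m\<ge>N. \<forall>n\<ge>N. rat_pnorm p (X m - X n) < e)"

definition p_equiv :: "nat \<Rightarrow> (nat \<Rightarrow> rat) \<Rightarrow> (nat \<Rightarrow> rat) \<Rightarrow> bool" where
  "p_equiv p X Y \<longleftrightarrow> p_cauchy p X \<and> p_cauchy p Y \<and>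
     (\<lambda>n. rat_pnorm p (X n - Y n)) \<longlonglongrightarrow> 0"

type_synonym qp = "(nat \<Rightarrow> rat) set"

definition qp_of_seq :: "nat \<Rightarrow> (nat \<Rightarrow> rat) \<Rightarrow> qp" where
  "qp_of_seq p X = {Y. p_equiv p X Y}"

definition Qp :: "nat \<Rightarrow> qp set" where
  "Qp p = {qp_of_seq p X | X. p_cauchy p X}"

definition qp_rep :: "qp \<Rightarrow> (nat \<Rightarrow> rat)" where
  "qp_rep x = (SOME X. X \<in> x)"

definition qp_zero :: "nat \<Rightarrow> qp" where
  "qp_zero p = qp_of_seq p (\<lambda>n. 0)"

definition qp_add :: "nat \<Rightarrow> qp \<Rightarrow> qp \<Rightarrow> qp" where
  "qp_add p x y = qp_of_seq p (\<lambda>n. qp_rep x n + qp_rep y n)"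

definition qp_neg :: "nat \<Rightarrow> qp \<Rightarrow> qp" where
  "qp_neg p x = qp_of_seq p (\<lambda>n. - qp_rep x n)"

definition qp_sub :: "nat \<Rightarrow> qp \<Rightarrow> qp \<Rightarrow> qp" where
  "qp_sub p x y = qp_add p x (qp_neg p y)"

definition qp_mult :: "nat \<Rightarrow> qp \<Rightarrow> qp \<Rightarrow> qp" where
  "qp_mult p x y = qp_of_seq p (\<lambda>n. qp_rep x n * qp_rep y n)"

definition qp_inverse :: "nat \<Rightarrow> qp \<Rightarrow> qp" where
  "qp_inverse p x = (if x = qp_zero p then qp_zero p
                     else qp_of_seq p (\<lambda>n. inverse (qp_rep x n)))"

definition qp_div :: "nat \<Rightarrow> qp \<Rightarrow> qp \<Rightarrow> qp" where
  "qp_div p x y = qp_mult p x (qp_inverse p y)"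

definition qp_norm :: "nat \<Rightarrow> qp \<Rightarrow> real" where
  "qp_norm p x = lim (\<lambda>n. rat_pnorm p (qp_rep x n))"

definition qp_ball :: "nat \<Rightarrow> qp \<Rightarrow> real \<Rightarrow> qp set" where
  "qp_ball p a r = {x \<in> Qp p. qp_norm p (qp_sub p x a) \<le> r}"

definition qp_unit_sphere :: "nat \<Rightarrow> qp set" where
  "qp_unit_sphere p = {x \<in> Qp p. qp_norm p x = 1}"

end

theory Submission
  imports Defs
begin

text \<open>
  For \<open>|x|\<^sub>p = 1\<close> the strict ultrametric inequality gives \<open>|bx + c|\<^sub>p = |c|\<^sub>p = 1\<close>, so
  \<open>f(x) - f(y) = c(x - y) / ((bx + c)(by + c))\<close> shows that \<open>f\<close> is an isometry of the unit
  sphere \<open>S\<^sub>1(0)\<close> into itself, and \<open>z \<mapsto> cz / (1 - bz)\<close> is a right inverse of \<open>f\<close> there.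
  A ball of radius \<open>r < 1\<close> around a point of \<open>S\<^sub>1(0)\<close> stays inside \<open>S\<^sub>1(0)\<close>, so the
  isometric bijection \<open>f\<close> of \<open>S\<^sub>1(0)\<close> maps \<open>U\<^sub>r(a)\<close> onto \<open>U\<^sub>r(f(a))\<close>.

  Since \<open>\<rat>\<^sub>p\<close> is a quotient of Cauchy sequences of rationals, all of this is computed on
  representatives: the norm of a Cauchy sequence with non-zero limit is eventually constant, so
  every point of \<open>S\<^sub>1(0)\<close> is represented by a sequence whose terms eventually have norm 1,
  and on such terms the identities above are identities in \<open>\<rat>\<close>.
\<close>

subsection \<open>The p-adic absolute value on the rationals\<close>

lemma rat_as_fraction:
  fixes x :: rat
  obtains a d where "x = of_int a / of_int d" "d \<noteq> 0"
proof -
  obtain a d where q: "quotient_of x = (a, d)"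
    by fastforce
  show ?thesis
    using that[OF quotient_of_div[OF q]] quotient_of_denom_pos[OF q] by simp
qed

lemma rat_pnorm_0 [simp]: "rat_pnorm p 0 = 0"
  by (simp add: rat_pnorm_def)

lemma rat_pnorm_nonneg: "rat_pnorm p x \<ge> 0"
  by (simp add: rat_pnorm_def)

locale padic =
  fixes p :: nat
  assumes prime: "prime p"

context padic
begin

lemma prime_elem_int: "prime_elem (int p)"
  using prime by (simp add: prime_nat_int_transfer)

lemma multiplicity_mult:
  "x \<noteq> 0 \<Longrightarrow> y \<noteq> 0 \<Longrightarrow>
    multiplicity (int p) (x * y) = multiplicity (int p) x + multiplicity (int p) y"
  by (rule prime_elem_multiplicity_mult_distrib[OF prime_elem_int])

lemma multiplicity_add_ge:
  assumes "x + y \<noteq> 0"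
  shows "min (multiplicity (int p) x) (multiplicity (int p) y) \<le> multiplicity (int p) (x + y)"
proof -
  let ?k = "min (multiplicity (int p) x) (multiplicity (int p) y)"
  have "int p ^ ?k dvd x" "int p ^ ?k dvd y"
    by (simp_all add: multiplicity_dvd')
  then have "int p ^ ?k dvd x + y"
    by simp
  then show ?thesis
    using multiplicity_geI[OF assms] prime_elem_not_unit[OF prime_elem_int] by blast
qed

lemma rat_pval_of_int_divide:
  assumes "a \<noteq> 0" "d \<noteq> 0"
  shows "rat_pval p (of_int a / of_int d) = int (multiplicity (int p) a) - int (multiplicity (int p) d)"
proof -
  obtain a' d' where q: "quotient_of (of_int a / of_int d) = (a', d')"
    by fastforce
  have "d' > 0"
    using quotient_of_denom_pos[OF q] .
  moreover have "of_int a / of_int d = (of_int a' / of_int d' :: rat)"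
    using quotient_of_div[OF q] .
  ultimately have cross: "a * d' = a' * d"
    using assms by (simp add: field_simps flip: of_int_mult)
  with assms \<open>d' > 0\<close> have "a' \<noteq> 0"
    by auto
  have "multiplicity (int p) a + multiplicity (int p) d' = multiplicity (int p) a' + multiplicity (int p) d"
    using arg_cong[OF cross, of "multiplicity (int p)"] assms \<open>d' > 0\<close> \<open>a' \<noteq> 0\<close>
    by (simp add: multiplicity_mult)
  then show ?thesis
    unfolding rat_pval_def q by simp
qed

lemma rat_pval_mult:
  assumes "x \<noteq> 0" "y \<noteq> 0"
  shows "rat_pval p (x * y) = rat_pval p x + rat_pval p y"
proof -
  obtain a d a' d' where x: "x = of_int a / of_int d" "d \<noteq> 0"
    and y: "y = of_int a' / of_int d'" "d' \<noteq> 0"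
    by (metis rat_as_fraction)
  with assms have "a \<noteq> 0" "a' \<noteq> 0"
    by auto
  have prod: "x * y = of_int (a * a') / of_int (d * d')"
    using x y by simp
  have "rat_pval p (x * y) = int (multiplicity (int p) (a * a')) - int (multiplicity (int p) (d * d'))"
    unfolding prod by (rule rat_pval_of_int_divide) (use x y \<open>a \<noteq> 0\<close> \<open>a' \<noteq> 0\<close> in auto)
  then show ?thesis
    using x y \<open>a \<noteq> 0\<close> \<open>a' \<noteq> 0\<close> by (simp add: rat_pval_of_int_divide multiplicity_mult)
qed

lemma rat_pval_add_ge:
  assumes "x \<noteq> 0" "y \<noteq> 0" "x + y \<noteq> 0"
  shows "min (rat_pval p x) (rat_pval p y) \<le> rat_pval p (x + y)"
proof -
  obtain a d a' d' where x: "x = of_int a / of_int d" "d \<noteq> 0"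
    and y: "y = of_int a' / of_int d'" "d' \<noteq> 0"
    by (metis rat_as_fraction)
  with assms have "a \<noteq> 0" "a' \<noteq> 0"
    by auto
  have sum: "x + y = of_int (a * d' + a' * d) / of_int (d * d')"
    using x y by (simp add: field_simps)
  with assms have "a * d' + a' * d \<noteq> 0"
    by (metis div_0 of_int_0)
  then have "rat_pval p (x + y)
      = int (multiplicity (int p) (a * d' + a' * d)) - int (multiplicity (int p) (d * d'))"
    unfolding sum by (rule rat_pval_of_int_divide) (use x y in auto)
  moreover have "min (multiplicity (int p) (a * d')) (multiplicity (int p) (a' * d))
      \<le> multiplicity (int p) (a * d' + a' * d)"
    using \<open>a * d' + a' * d \<noteq> 0\<close> by (rule multiplicity_add_ge)
  ultimately show ?thesis
    using x y \<open>a \<noteq> 0\<close> \<open>a' \<noteq> 0\<close> by (simp add: rat_pval_of_int_divide multiplicity_mult)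
qed

lemma real_p_gt_1: "real p > 1"
  using prime prime_gt_1_nat by simp

lemma rat_pnorm_1 [simp]: "rat_pnorm p 1 = 1"
  using real_p_gt_1 by (simp add: rat_pnorm_def rat_pval_def)

lemma rat_pnorm_minus_1: "rat_pnorm p (- 1) = 1"
  using real_p_gt_1 by (simp add: rat_pnorm_def rat_pval_def multiplicity_unit_right)

lemma rat_pnorm_mult: "rat_pnorm p (x * y) = rat_pnorm p x * rat_pnorm p y"
  using real_p_gt_1 by (simp add: rat_pnorm_def rat_pval_mult powr_add[symmetric])

lemma rat_pnorm_minus [simp]: "rat_pnorm p (- x) = rat_pnorm p x"
  using rat_pnorm_mult[of "- 1" x] by (simp add: rat_pnorm_minus_1)

lemma rat_pnorm_minus_commute: "rat_pnorm p (x - y) = rat_pnorm p (y - x)"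
  by (metis minus_diff_eq rat_pnorm_minus)

lemma rat_pnorm_inverse: "rat_pnorm p (inverse x) = inverse (rat_pnorm p x)"
  by (metis inverse_nonzero_iff_nonzero inverse_unique rat_pnorm_1 rat_pnorm_0
      rat_pnorm_mult right_inverse inverse_zero)

lemma rat_pnorm_divide: "rat_pnorm p (x / y) = rat_pnorm p x / rat_pnorm p y"
  by (simp add: divide_inverse rat_pnorm_mult rat_pnorm_inverse)

lemma rat_pnorm_inverse_diff:
  assumes "x \<noteq> 0" "y \<noteq> 0"
  shows "rat_pnorm p (inverse x - inverse y) = rat_pnorm p (x - y) / (rat_pnorm p x * rat_pnorm p y)"
proof -
  have "inverse x - inverse y = (y - x) / (x * y)"
    using assms by (simp add: field_simps)
  then show ?thesis
    by (simp add: rat_pnorm_divide rat_pnorm_mult rat_pnorm_minus_commute[of y])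
qed

lemma rat_pnorm_add_le_max: "rat_pnorm p (x + y) \<le> max (rat_pnorm p x) (rat_pnorm p y)"
proof (cases "x = 0 \<or> y = 0 \<or> x + y = 0")
  case True
  then show ?thesis
    using rat_pnorm_nonneg[of p x] rat_pnorm_nonneg[of p y] by auto
next
  case False
  then have "min (rat_pval p x) (rat_pval p y) \<le> rat_pval p (x + y)"
    using rat_pval_add_ge by auto
  then have "real p powr - rat_pval p (x + y)
      \<le> max (real p powr - rat_pval p x) (real p powr - rat_pval p y)"
    using real_p_gt_1 by (auto simp: min_def max_def split: if_splits)
  with False show ?thesis
    by (simp add: rat_pnorm_def)
qed

lemma rat_pnorm_triangle: "rat_pnorm p (x + y) \<le> rat_pnorm p x + rat_pnorm p y"
  using rat_pnorm_add_le_max[of x y] rat_pnorm_nonneg[of p x] rat_pnorm_nonneg[of p y] by linarith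

lemma rat_pnorm_add_eq_left:
  assumes "rat_pnorm p y < rat_pnorm p x"
  shows "rat_pnorm p (x + y) = rat_pnorm p x"
  using rat_pnorm_add_le_max[of x y] rat_pnorm_add_le_max[of "x + y" "- y"] assms by auto

lemma rat_pnorm_abs_diff_le: "\<bar>rat_pnorm p x - rat_pnorm p y\<bar> \<le> rat_pnorm p (x - y)"
  using rat_pnorm_triangle[of "x - y" y] rat_pnorm_triangle[of "y - x" x] rat_pnorm_minus_commute[of x y]
  by (simp add: abs_le_iff)

end

subsection \<open>Cauchy sequences of rationals\<close>

lemma rat_pnorm_tendsto_zero:
  assumes "(g \<longlongrightarrow> 0) F" "\<forall>\<^sub>F x in F. rat_pnorm p (f x) \<le> g x"
  shows "((\<lambda>x. rat_pnorm p (f x)) \<longlongrightarrow> 0) F"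
  using assms(1)
  by (rule tendsto_0_le[where K = 1])
    (use assms(2) in \<open>auto elim: eventually_mono simp: rat_pnorm_nonneg\<close>)

lemma p_cauchyD:
  "p_cauchy p X \<Longrightarrow> e > 0 \<Longrightarrow> \<exists>K. \<forall>m\<ge>K. \<forall>n\<ge>K. rat_pnorm p (X m - X n) < e"
  unfolding p_cauchy_def by blast

lemma p_cauchy_const: "p_cauchy p (\<lambda>n. x)"
  unfolding p_cauchy_def by simp

lemma p_equiv_refl: "p_cauchy p X \<Longrightarrow> p_equiv p X X"
  unfolding p_equiv_def by simp

lemma p_equiv_eventually_eq:
  assumes "p_cauchy p X" "p_cauchy p Y" "\<forall>\<^sub>F n in sequentially. X n = Y n"
  shows "p_equiv p X Y"
proof -
  have "\<forall>\<^sub>F n in sequentially. rat_pnorm p (X n - Y n) = 0"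
    using assms(3) by eventually_elim simp
  then have "(\<lambda>n. rat_pnorm p (X n - Y n)) \<longlonglongrightarrow> 0"
    by (rule tendsto_eventually)
  with assms show ?thesis
    unfolding p_equiv_def by auto
qed

context padic
begin

lemma p_cauchy_bounded:
  assumes "p_cauchy p X"
  obtains M where "M > 0" "\<And>n. rat_pnorm p (X n) \<le> M"
proof -
  obtain K where K: "\<forall>m\<ge>K. \<forall>n\<ge>K. rat_pnorm p (X m - X n) < 1"
    using p_cauchyD[OF assms, of 1] by auto
  define M where "M = 1 + (\<Sum>i\<le>K. rat_pnorm p (X i))"
  have "rat_pnorm p (X n) \<le> M" for n
  proof (cases "n \<ge> K")
    case True
    have "rat_pnorm p (X n) \<le> rat_pnorm p (X n - X K) + rat_pnorm p (X K)"
      using rat_pnorm_triangle[of "X n - X K" "X K"] by simp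
    also have "\<dots> \<le> M"
      unfolding M_def using K True member_le_sum[of K "{..K}" "\<lambda>i. rat_pnorm p (X i)"]
      by (fastforce simp: rat_pnorm_nonneg)
    finally show ?thesis .
  next
    case False
    then show ?thesis
      unfolding M_def using member_le_sum[of n "{..K}" "\<lambda>i. rat_pnorm p (X i)"]
      by (simp add: rat_pnorm_nonneg)
  qed
  moreover have "M > 0"
    unfolding M_def by (simp add: add_pos_nonneg sum_nonneg rat_pnorm_nonneg)
  ultimately show ?thesis
    using that by blast
qed

lemma p_cauchy_add:
  assumes "p_cauchy p X" "p_cauchy p Y"
  shows "p_cauchy p (\<lambda>n. X n + Y n)"
  unfolding p_cauchy_def
proof (intro allI impI)
  fix e :: real
  assume "e > 0"
  then obtain K1 K2 where K1: "\<forall>m\<ge>K1. \<forall>n\<ge>K1. rat_pnorm p (X m - X n) < e / 2"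
    and K2: "\<forall>m\<ge>K2. \<forall>n\<ge>K2. rat_pnorm p (Y m - Y n) < e / 2"
    using p_cauchyD[OF assms(1), of "e / 2"] p_cauchyD[OF assms(2), of "e / 2"] by auto
  have "rat_pnorm p (X m + Y m - (X n + Y n)) < e" if "m \<ge> max K1 K2" "n \<ge> max K1 K2" for m n
  proof -
    have "rat_pnorm p (X m + Y m - (X n + Y n)) \<le> rat_pnorm p (X m - X n) + rat_pnorm p (Y m - Y n)"
      using rat_pnorm_triangle[of "X m - X n" "Y m - Y n"] by (simp add: algebra_simps)
    moreover have "rat_pnorm p (X m - X n) < e / 2" "rat_pnorm p (Y m - Y n) < e / 2"
      using K1 K2 that by auto
    ultimately show ?thesis
      by linarith
  qed
  then show "\<exists>K. \<forall>m\<ge>K. \<forall>n\<ge>K. rat_pnorm p (X m + Y m - (X n + Y n)) < e"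
    by blast
qed

lemma p_cauchy_minus: "p_cauchy p X \<Longrightarrow> p_cauchy p (\<lambda>n. - X n)"
  unfolding p_cauchy_def by (metis minus_diff_minus rat_pnorm_minus)

lemma p_cauchy_diff: "p_cauchy p X \<Longrightarrow> p_cauchy p Y \<Longrightarrow> p_cauchy p (\<lambda>n. X n - Y n)"
  using p_cauchy_add[of X "\<lambda>n. - Y n"] p_cauchy_minus[of Y] by simp

lemma p_cauchy_mult:
  assumes "p_cauchy p X" "p_cauchy p Y"
  shows "p_cauchy p (\<lambda>n. X n * Y n)"
  unfolding p_cauchy_def
proof (intro allI impI)
  fix e :: real
  assume "e > 0"
  obtain MX where MX: "MX > 0" "\<And>n. rat_pnorm p (X n) \<le> MX"
    using p_cauchy_bounded[OF assms(1)] by blast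
  obtain MY where MY: "MY > 0" "\<And>n. rat_pnorm p (Y n) \<le> MY"
    using p_cauchy_bounded[OF assms(2)] by blast
  obtain K1 K2 where K1: "\<forall>m\<ge>K1. \<forall>n\<ge>K1. rat_pnorm p (Y m - Y n) < e / (4 * MX)"
    and K2: "\<forall>m\<ge>K2. \<forall>n\<ge>K2. rat_pnorm p (X m - X n) < e / (4 * MY)"
    using p_cauchyD[OF assms(2), of "e / (4 * MX)"] p_cauchyD[OF assms(1), of "e / (4 * MY)"]
      \<open>e > 0\<close> MX MY by auto
  have "rat_pnorm p (X m * Y m - X n * Y n) < e" if "m \<ge> max K1 K2" "n \<ge> max K1 K2" for m n
  proof -
    have "X m * Y m - X n * Y n = X m * (Y m - Y n) + (X m - X n) * Y n"
      by (simp add: algebra_simps)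
    then have "rat_pnorm p (X m * Y m - X n * Y n)
        \<le> rat_pnorm p (X m) * rat_pnorm p (Y m - Y n) + rat_pnorm p (X m - X n) * rat_pnorm p (Y n)"
      by (metis rat_pnorm_triangle rat_pnorm_mult)
    also have "\<dots> \<le> MX * (e / (4 * MX)) + (e / (4 * MY)) * MY"
      using K1 K2 that MX MY \<open>e > 0\<close>
      by (intro add_mono mult_mono) (auto simp: rat_pnorm_nonneg less_imp_le)
    also have "\<dots> < e"
      using MX MY \<open>e > 0\<close> by simp
    finally show ?thesis .
  qed
  then show "\<exists>K. \<forall>m\<ge>K. \<forall>n\<ge>K. rat_pnorm p (X m * Y m - X n * Y n) < e"
    by blast
qed

lemma p_cauchy_inverse:
  assumes "p_cauchy p X" "d > 0" "\<forall>\<^sub>F n in sequentially. d \<le> rat_pnorm p (X n)"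
  shows "p_cauchy p (\<lambda>n. inverse (X n))"
  unfolding p_cauchy_def
proof (intro allI impI)
  fix e :: real
  assume "e > 0"
  obtain K0 where K0: "\<And>n. n \<ge> K0 \<Longrightarrow> d \<le> rat_pnorm p (X n)"
    using assms(3) unfolding eventually_sequentially by blast
  obtain K where K: "\<forall>m\<ge>K. \<forall>n\<ge>K. rat_pnorm p (X m - X n) < e * (d * d)"
    using p_cauchyD[OF assms(1), of "e * (d * d)"] \<open>e > 0\<close> assms(2) by auto
  have "rat_pnorm p (inverse (X m) - inverse (X n)) < e" if "m \<ge> max K K0" "n \<ge> max K K0" for m n
  proof -
    have bounds: "d \<le> rat_pnorm p (X m)" "d \<le> rat_pnorm p (X n)"
      using K0 that by auto
    then have "X m \<noteq> 0" "X n \<noteq> 0"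
      using assms(2) by auto
    then have "rat_pnorm p (inverse (X m) - inverse (X n))
        = rat_pnorm p (X m - X n) / (rat_pnorm p (X m) * rat_pnorm p (X n))"
      by (rule rat_pnorm_inverse_diff)
    also have "\<dots> \<le> rat_pnorm p (X m - X n) / (d * d)"
      using assms(2) bounds by (intro divide_left_mono mult_mono) (auto simp: rat_pnorm_nonneg)
    also have "\<dots> < e"
      using K that assms(2) by (simp add: pos_divide_less_eq)
    finally show ?thesis .
  qed
  then show "\<exists>K. \<forall>m\<ge>K. \<forall>n\<ge>K. rat_pnorm p (inverse (X m) - inverse (X n)) < e"
    by blast
qed

lemma p_equiv_sym: "p_equiv p X Y \<Longrightarrow> p_equiv p Y X"
  unfolding p_equiv_def by (simp add: rat_pnorm_minus_commute)

lemma p_equiv_trans: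
  assumes "p_equiv p X Y" "p_equiv p Y Z"
  shows "p_equiv p X Z"
proof -
  have lim: "(\<lambda>n. rat_pnorm p (X n - Y n) + rat_pnorm p (Y n - Z n)) \<longlonglongrightarrow> 0"
    using assms unfolding p_equiv_def by (intro tendsto_add_zero) auto
  have bound: "rat_pnorm p (X n - Z n) \<le> rat_pnorm p (X n - Y n) + rat_pnorm p (Y n - Z n)" for n
    using rat_pnorm_triangle[of "X n - Y n" "Y n - Z n"] by simp
  have "(\<lambda>n. rat_pnorm p (X n - Z n)) \<longlonglongrightarrow> 0"
    using lim by (rule rat_pnorm_tendsto_zero) (simp add: bound always_eventually)
  with assms show ?thesis
    unfolding p_equiv_def by auto
qed

lemma p_equiv_add:
  assumes "p_equiv p X X'" "p_equiv p Y Y'"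
  shows "p_equiv p (\<lambda>n. X n + Y n) (\<lambda>n. X' n + Y' n)"
proof -
  have lim: "(\<lambda>n. rat_pnorm p (X n - X' n) + rat_pnorm p (Y n - Y' n)) \<longlonglongrightarrow> 0"
    using assms unfolding p_equiv_def by (intro tendsto_add_zero) auto
  have bound: "rat_pnorm p (X n + Y n - (X' n + Y' n))
      \<le> rat_pnorm p (X n - X' n) + rat_pnorm p (Y n - Y' n)" for n
    using rat_pnorm_triangle[of "X n - X' n" "Y n - Y' n"] by (simp add: algebra_simps)
  have "(\<lambda>n. rat_pnorm p (X n + Y n - (X' n + Y' n))) \<longlonglongrightarrow> 0"
    using lim by (rule rat_pnorm_tendsto_zero) (simp add: bound always_eventually)
  with assms show ?thesis
    unfolding p_equiv_def by (auto intro: p_cauchy_add)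
qed

lemma p_equiv_minus: "p_equiv p X X' \<Longrightarrow> p_equiv p (\<lambda>n. - X n) (\<lambda>n. - X' n)"
  unfolding p_equiv_def minus_diff_minus rat_pnorm_minus by (simp add: p_cauchy_minus)

lemma p_equiv_mult:
  assumes "p_equiv p X X'" "p_equiv p Y Y'"
  shows "p_equiv p (\<lambda>n. X n * Y n) (\<lambda>n. X' n * Y' n)"
proof -
  have "p_cauchy p X" "p_cauchy p Y'"
    using assms unfolding p_equiv_def by auto
  obtain MX where MX: "MX > 0" "\<And>n. rat_pnorm p (X n) \<le> MX"
    using p_cauchy_bounded[OF \<open>p_cauchy p X\<close>] by blast
  obtain MY where MY: "MY > 0" "\<And>n. rat_pnorm p (Y' n) \<le> MY"
    using p_cauchy_bounded[OF \<open>p_cauchy p Y'\<close>] by blast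
  have lim: "(\<lambda>n. MX * rat_pnorm p (Y n - Y' n) + rat_pnorm p (X n - X' n) * MY) \<longlonglongrightarrow> 0"
    using assms unfolding p_equiv_def
    by (intro tendsto_add_zero tendsto_mult_right_zero tendsto_mult_left_zero) auto
  have bound: "rat_pnorm p (X n * Y n - X' n * Y' n)
      \<le> MX * rat_pnorm p (Y n - Y' n) + rat_pnorm p (X n - X' n) * MY" for n
  proof -
    have "X n * Y n - X' n * Y' n = X n * (Y n - Y' n) + (X n - X' n) * Y' n"
      by (simp add: algebra_simps)
    then have "rat_pnorm p (X n * Y n - X' n * Y' n)
        \<le> rat_pnorm p (X n) * rat_pnorm p (Y n - Y' n) + rat_pnorm p (X n - X' n) * rat_pnorm p (Y' n)"
      by (metis rat_pnorm_triangle rat_pnorm_mult)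
    also have "\<dots> \<le> MX * rat_pnorm p (Y n - Y' n) + rat_pnorm p (X n - X' n) * MY"
      using MX MY by (intro add_mono mult_mono) (auto simp: rat_pnorm_nonneg)
    finally show ?thesis .
  qed
  have "(\<lambda>n. rat_pnorm p (X n * Y n - X' n * Y' n)) \<longlonglongrightarrow> 0"
    using lim by (rule rat_pnorm_tendsto_zero) (simp add: bound always_eventually)
  with assms show ?thesis
    unfolding p_equiv_def by (auto intro: p_cauchy_mult)
qed

lemma p_equiv_eventually_lower_bound:
  assumes "p_equiv p X X'" "d > 0" "\<forall>\<^sub>F n in sequentially. d \<le> rat_pnorm p (X n)"
  shows "\<forall>\<^sub>F n in sequentially. d / 2 \<le> rat_pnorm p (X' n)"
proof -
  have "(\<lambda>n. rat_pnorm p (X n - X' n)) \<longlonglongrightarrow> 0"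
    using assms(1) unfolding p_equiv_def by auto
  then have "\<forall>\<^sub>F n in sequentially. rat_pnorm p (X n - X' n) < d / 2"
    using assms(2) by (auto dest: order_tendstoD(2)[where a = "d / 2"])
  with assms(3) show ?thesis
  proof eventually_elim
    case (elim n)
    then show ?case
      using rat_pnorm_abs_diff_le[of "X n" "X' n"] by (simp add: abs_le_iff)
  qed
qed

lemma p_equiv_inverse:
  assumes "p_equiv p X X'" "d > 0" "\<forall>\<^sub>F n in sequentially. d \<le> rat_pnorm p (X n)"
  shows "p_equiv p (\<lambda>n. inverse (X n)) (\<lambda>n. inverse (X' n))"
proof -
  have lower': "\<forall>\<^sub>F n in sequentially. d / 2 \<le> rat_pnorm p (X' n)"
    using assms by (rule p_equiv_eventually_lower_bound)
  have "(\<lambda>n. rat_pnorm p (X n - X' n) * (2 / (d * d))) \<longlonglongrightarrow> 0"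
    using assms(1) unfolding p_equiv_def by (intro tendsto_mult_left_zero) auto
  moreover have "\<forall>\<^sub>F n in sequentially.
      rat_pnorm p (inverse (X n) - inverse (X' n)) \<le> rat_pnorm p (X n - X' n) * (2 / (d * d))"
    using assms(3) lower'
  proof eventually_elim
    case (elim n)
    then have "X n \<noteq> 0" "X' n \<noteq> 0"
      using assms(2) by auto
    then have "rat_pnorm p (inverse (X n) - inverse (X' n))
        = rat_pnorm p (X n - X' n) / (rat_pnorm p (X n) * rat_pnorm p (X' n))"
      by (rule rat_pnorm_inverse_diff)
    also have "\<dots> \<le> rat_pnorm p (X n - X' n) / (d * (d / 2))"
      using assms(2) elim by (intro divide_left_mono mult_mono) (auto simp: rat_pnorm_nonneg)
    finally show ?case
      by simp
  qed
  ultimately have "(\<lambda>n. rat_pnorm p (inverse (X n) - inverse (X' n))) \<longlonglongrightarrow> 0"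
    by (rule rat_pnorm_tendsto_zero)
  moreover have "p_cauchy p (\<lambda>n. inverse (X n))" "p_cauchy p (\<lambda>n. inverse (X' n))"
    using assms(1) unfolding p_equiv_def
    by (auto intro: p_cauchy_inverse[OF _ assms(2,3)] p_cauchy_inverse[OF _ _ lower'] simp: assms(2))
  ultimately show ?thesis
    unfolding p_equiv_def by auto
qed

lemma p_equiv_tendsto_rat_pnorm:
  assumes "p_equiv p X Y" "(\<lambda>n. rat_pnorm p (X n)) \<longlonglongrightarrow> L"
  shows "(\<lambda>n. rat_pnorm p (Y n)) \<longlonglongrightarrow> L"
proof -
  have "(\<lambda>n. rat_pnorm p (Y n - X n)) \<longlonglongrightarrow> 0"
    using assms(1) unfolding p_equiv_def by (simp add: rat_pnorm_minus_commute)
  then have "(\<lambda>n. rat_pnorm p (Y n) - rat_pnorm p (X n)) \<longlonglongrightarrow> 0"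
    by (rule tendsto_0_le[where K = 1]) (simp add: rat_pnorm_abs_diff_le rat_pnorm_nonneg always_eventually)
  with assms(2) show ?thesis
    by (rule Lim_transform)
qed

lemma p_cauchy_convergent_rat_pnorm:
  assumes "p_cauchy p X"
  shows "convergent (\<lambda>n. rat_pnorm p (X n))"
proof (rule Cauchy_convergent, rule metric_CauchyI)
  fix e :: real
  assume "e > 0"
  then obtain K where "\<forall>m\<ge>K. \<forall>n\<ge>K. rat_pnorm p (X m - X n) < e"
    using p_cauchyD[OF assms] by blast
  then have "\<forall>m\<ge>K. \<forall>n\<ge>K. dist (rat_pnorm p (X m)) (rat_pnorm p (X n)) < e"
    unfolding dist_real_def by (meson order_le_less_trans rat_pnorm_abs_diff_le)
  then show "\<exists>K. \<forall>m\<ge>K. \<forall>n\<ge>K. dist (rat_pnorm p (X m)) (rat_pnorm p (X n)) < e"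
    by blast
qed

lemma rat_pnorm_eventually_const:
  assumes "p_cauchy p X" "(\<lambda>n. rat_pnorm p (X n)) \<longlonglongrightarrow> L" "L > 0"
  shows "\<forall>\<^sub>F n in sequentially. rat_pnorm p (X n) = L"
proof -
  have "L / 2 > 0"
    using assms(3) by simp
  then obtain K1 where K1: "\<forall>m\<ge>K1. \<forall>n\<ge>K1. rat_pnorm p (X m - X n) < L / 2"
    using p_cauchyD[OF assms(1)] by blast
  have "\<forall>\<^sub>F n in sequentially. L / 2 < rat_pnorm p (X n)"
    using order_tendstoD(1)[OF assms(2), of "L / 2"] assms(3) by simp
  then obtain K2 where K2: "\<And>n. n \<ge> K2 \<Longrightarrow> L / 2 < rat_pnorm p (X n)"
    unfolding eventually_sequentially by blast
  define K where "K = max K1 K2"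
  have "rat_pnorm p (X n) = rat_pnorm p (X K)" if "n \<ge> K" for n
  proof -
    have "rat_pnorm p (X n - X K) < L / 2" "L / 2 < rat_pnorm p (X K)"
      using K1 K2[of K] that unfolding K_def by simp_all
    then have "rat_pnorm p (X n - X K) < rat_pnorm p (X K)"
      by linarith
    then show ?thesis
      using rat_pnorm_add_eq_left[of "X n - X K" "X K"] by simp
  qed
  then have const: "\<forall>\<^sub>F n in sequentially. rat_pnorm p (X n) = rat_pnorm p (X K)"
    unfolding eventually_sequentially by blast
  then have "(\<lambda>n. rat_pnorm p (X n)) \<longlonglongrightarrow> rat_pnorm p (X K)"
    by (rule tendsto_eventually)
  with assms(2) have "L = rat_pnorm p (X K)"
    by (rule LIMSEQ_unique)
  with const show ?thesis
    by simp
qed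

end

subsection \<open>Arithmetic of Q_p on representatives\<close>

lemma qp_of_seq_in_Qp: "p_cauchy p X \<Longrightarrow> qp_of_seq p X \<in> Qp p"
  unfolding Qp_def by blast

lemma QpE:
  assumes "x \<in> Qp p"
  obtains X where "p_cauchy p X" "x = qp_of_seq p X"
  using assms unfolding Qp_def by blast

context padic
begin

lemma qp_of_seq_eq_iff:
  assumes "p_cauchy p Y"
  shows "qp_of_seq p X = qp_of_seq p Y \<longleftrightarrow> p_equiv p X Y"
proof
  assume "qp_of_seq p X = qp_of_seq p Y"
  moreover have "Y \<in> qp_of_seq p Y"
    using p_equiv_refl[OF assms] unfolding qp_of_seq_def by simp
  ultimately have "Y \<in> qp_of_seq p X"
    by simp
  then show "p_equiv p X Y"
    unfolding qp_of_seq_def by simp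
next
  assume "p_equiv p X Y"
  then have "p_equiv p X = p_equiv p Y"
    by (intro ext) (meson p_equiv_sym p_equiv_trans)
  then show "qp_of_seq p X = qp_of_seq p Y"
    unfolding qp_of_seq_def by simp
qed

lemma p_equiv_qp_rep:
  assumes "p_cauchy p X"
  shows "p_equiv p X (qp_rep (qp_of_seq p X))"
proof -
  have "X \<in> qp_of_seq p X"
    using p_equiv_refl[OF assms] unfolding qp_of_seq_def by simp
  then have "qp_rep (qp_of_seq p X) \<in> qp_of_seq p X"
    unfolding qp_rep_def by (rule someI[where P = "\<lambda>Y. Y \<in> qp_of_seq p X"])
  then show ?thesis
    unfolding qp_of_seq_def by simp
qed

lemma qp_rep_equiv:
  assumes "p_cauchy p X"
  shows "p_equiv p (qp_rep (qp_of_seq p X)) X"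
  using p_equiv_qp_rep[OF assms] by (rule p_equiv_sym)

lemma qp_add_of_seq:
  assumes "p_cauchy p X" "p_cauchy p Y"
  shows "qp_add p (qp_of_seq p X) (qp_of_seq p Y) = qp_of_seq p (\<lambda>n. X n + Y n)"
  unfolding qp_add_def qp_of_seq_eq_iff[OF p_cauchy_add[OF assms]]
  by (intro p_equiv_add qp_rep_equiv assms)

lemma qp_neg_of_seq:
  assumes "p_cauchy p X"
  shows "qp_neg p (qp_of_seq p X) = qp_of_seq p (\<lambda>n. - X n)"
  unfolding qp_neg_def qp_of_seq_eq_iff[OF p_cauchy_minus[OF assms]]
  by (intro p_equiv_minus qp_rep_equiv assms)

lemma qp_sub_of_seq:
  assumes "p_cauchy p X" "p_cauchy p Y"
  shows "qp_sub p (qp_of_seq p X) (qp_of_seq p Y) = qp_of_seq p (\<lambda>n. X n - Y n)"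
  unfolding qp_sub_def qp_neg_of_seq[OF assms(2)] qp_add_of_seq[OF assms(1) p_cauchy_minus[OF assms(2)]]
  by simp

lemma qp_mult_of_seq:
  assumes "p_cauchy p X" "p_cauchy p Y"
  shows "qp_mult p (qp_of_seq p X) (qp_of_seq p Y) = qp_of_seq p (\<lambda>n. X n * Y n)"
  unfolding qp_mult_def qp_of_seq_eq_iff[OF p_cauchy_mult[OF assms]]
  by (intro p_equiv_mult qp_rep_equiv assms)

lemma qp_inverse_of_seq:
  assumes "p_cauchy p X" "d > 0" "\<forall>\<^sub>F n in sequentially. d \<le> rat_pnorm p (X n)"
  shows "qp_inverse p (qp_of_seq p X) = qp_of_seq p (\<lambda>n. inverse (X n))"
proof -
  have "\<not> p_equiv p X (\<lambda>n. 0)"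
  proof
    assume "p_equiv p X (\<lambda>n. 0)"
    then have "\<forall>\<^sub>F n in sequentially. d / 2 \<le> rat_pnorm p 0"
      using p_equiv_eventually_lower_bound[OF _ assms(2,3)] by blast
    with assms(2) show False
      by (simp add: eventually_False_sequentially)
  qed
  then have "qp_of_seq p X \<noteq> qp_zero p"
    unfolding qp_zero_def using qp_of_seq_eq_iff[OF p_cauchy_const] by blast
  moreover have "p_equiv p (\<lambda>n. inverse (qp_rep (qp_of_seq p X) n)) (\<lambda>n. inverse (X n))"
    by (rule p_equiv_sym, rule p_equiv_inverse[OF p_equiv_qp_rep[OF assms(1)] assms(2,3)])
  ultimately show ?thesis
    unfolding qp_inverse_def using qp_of_seq_eq_iff[OF p_cauchy_inverse[OF assms]] by simp
qed

lemma qp_div_of_seq: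
  assumes "p_cauchy p X" "p_cauchy p Y" "d > 0" "\<forall>\<^sub>F n in sequentially. d \<le> rat_pnorm p (Y n)"
  shows "qp_div p (qp_of_seq p X) (qp_of_seq p Y) = qp_of_seq p (\<lambda>n. X n / Y n)"
  unfolding qp_div_def qp_inverse_of_seq[OF assms(2-4)] qp_mult_of_seq[OF assms(1) p_cauchy_inverse[OF assms(2-4)]]
  by (simp add: divide_inverse)

lemma qp_norm_of_seq:
  assumes "p_cauchy p X"
  shows "(\<lambda>n. rat_pnorm p (X n)) \<longlonglongrightarrow> qp_norm p (qp_of_seq p X)"
proof -
  obtain L where L: "(\<lambda>n. rat_pnorm p (X n)) \<longlonglongrightarrow> L"
    using p_cauchy_convergent_rat_pnorm[OF assms] unfolding convergent_def by blast
  then have "(\<lambda>n. rat_pnorm p (qp_rep (qp_of_seq p X) n)) \<longlonglongrightarrow> L"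
    by (rule p_equiv_tendsto_rat_pnorm[OF p_equiv_qp_rep[OF assms]])
  then have "qp_norm p (qp_of_seq p X) = L"
    unfolding qp_norm_def by (rule limI)
  with L show ?thesis
    by simp
qed

lemma qp_norm_sub_of_seq:
  assumes "p_cauchy p X" "p_cauchy p Y"
  shows "(\<lambda>n. rat_pnorm p (X n - Y n)) \<longlonglongrightarrow> qp_norm p (qp_sub p (qp_of_seq p X) (qp_of_seq p Y))"
  unfolding qp_sub_of_seq[OF assms] by (intro qp_norm_of_seq p_cauchy_diff assms)

end

subsection \<open>The unit sphere\<close>

definition p_unit_seq :: "nat \<Rightarrow> (nat \<Rightarrow> rat) \<Rightarrow> bool" where
  "p_unit_seq p X \<longleftrightarrow> p_cauchy p X \<and> (\<forall>\<^sub>F n in sequentially. rat_pnorm p (X n) = 1)"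

lemma p_unit_seqD:
  assumes "p_unit_seq p X"
  shows "p_cauchy p X" "\<forall>\<^sub>F n in sequentially. rat_pnorm p (X n) = 1"
  using assms unfolding p_unit_seq_def by auto

context padic
begin

lemma qp_unit_sphere_iff: "x \<in> qp_unit_sphere p \<longleftrightarrow> (\<exists>X. p_unit_seq p X \<and> x = qp_of_seq p X)"
proof
  assume x: "x \<in> qp_unit_sphere p"
  then obtain X where X: "p_cauchy p X" "x = qp_of_seq p X"
    unfolding qp_unit_sphere_def by (auto elim: QpE)
  have "(\<lambda>n. rat_pnorm p (X n)) \<longlonglongrightarrow> 1"
    using qp_norm_of_seq[OF X(1)] x X(2) unfolding qp_unit_sphere_def by simp
  then have "\<forall>\<^sub>F n in sequentially. rat_pnorm p (X n) = 1"
    using rat_pnorm_eventually_const[OF X(1)] by simp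
  with X show "\<exists>X. p_unit_seq p X \<and> x = qp_of_seq p X"
    unfolding p_unit_seq_def by blast
next
  assume "\<exists>X. p_unit_seq p X \<and> x = qp_of_seq p X"
  then obtain X where X: "p_unit_seq p X" "x = qp_of_seq p X"
    by blast
  have "(\<lambda>n. rat_pnorm p (X n)) \<longlonglongrightarrow> 1"
    using p_unit_seqD(2)[OF X(1)] by (rule tendsto_eventually)
  moreover have "(\<lambda>n. rat_pnorm p (X n)) \<longlonglongrightarrow> qp_norm p x"
    unfolding X(2) using p_unit_seqD(1)[OF X(1)] by (rule qp_norm_of_seq)
  ultimately have "qp_norm p x = 1"
    using LIMSEQ_unique by metis
  then show "x \<in> qp_unit_sphere p"
    unfolding qp_unit_sphere_def X(2) using qp_of_seq_in_Qp p_unit_seqD(1)[OF X(1)] by simp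
qed

lemma qp_norm_less_1E:
  assumes "b \<in> Qp p" "qp_norm p b < 1"
  obtains B where "p_cauchy p B" "b = qp_of_seq p B" "\<forall>\<^sub>F n in sequentially. rat_pnorm p (B n) < 1"
proof -
  obtain B where B: "p_cauchy p B" "b = qp_of_seq p B"
    using assms(1) by (rule QpE)
  then have "\<forall>\<^sub>F n in sequentially. rat_pnorm p (B n) < 1"
    using order_tendstoD(2)[OF qp_norm_of_seq[OF B(1)], of 1] assms(2) by simp
  with B that show ?thesis
    by blast
qed

lemma qp_center_in_ball:
  assumes "a \<in> Qp p" "r \<ge> 0"
  shows "a \<in> qp_ball p a r"
proof -
  obtain A where A: "p_cauchy p A" "a = qp_of_seq p A"
    using assms(1) by (rule QpE)
  have "(\<lambda>n. rat_pnorm p (A n - A n)) \<longlonglongrightarrow> qp_norm p (qp_sub p a a)"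
    unfolding A(2) using A(1) A(1) by (rule qp_norm_sub_of_seq)
  then have "qp_norm p (qp_sub p a a) = 0"
    by (simp add: LIMSEQ_const_iff)
  with assms show ?thesis
    unfolding qp_ball_def by simp
qed

lemma qp_ball_subset_unit_sphere:
  assumes "a \<in> qp_unit_sphere p" "r < 1"
  shows "qp_ball p a r \<subseteq> qp_unit_sphere p"
proof
  fix z
  assume z: "z \<in> qp_ball p a r"
  obtain A where A: "p_unit_seq p A" "a = qp_of_seq p A"
    using assms(1) unfolding qp_unit_sphere_iff by blast
  obtain Z where Z: "p_cauchy p Z" "z = qp_of_seq p Z"
    using z unfolding qp_ball_def by (auto elim: QpE)
  have "(\<lambda>n. rat_pnorm p (Z n - A n)) \<longlonglongrightarrow> qp_norm p (qp_sub p z a)"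
    unfolding Z(2) A(2) using Z(1) p_unit_seqD(1)[OF A(1)] by (rule qp_norm_sub_of_seq)
  moreover have "qp_norm p (qp_sub p z a) < 1"
    using z assms(2) unfolding qp_ball_def by simp
  ultimately have "\<forall>\<^sub>F n in sequentially. rat_pnorm p (Z n - A n) < 1"
    by (rule order_tendstoD(2))
  then have "\<forall>\<^sub>F n in sequentially. rat_pnorm p (Z n) = 1"
    using p_unit_seqD(2)[OF A(1)]
  proof eventually_elim
    case (elim n)
    then show ?case
      using rat_pnorm_add_eq_left[of "Z n - A n" "A n"] by simp
  qed
  with Z show "z \<in> qp_unit_sphere p"
    unfolding qp_unit_sphere_iff p_unit_seq_def by blast
qed

lemma p_unit_seq_mult:
  assumes "p_unit_seq p X" "p_unit_seq p Y"
  shows "p_unit_seq p (\<lambda>n. X n * Y n)"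
  using assms unfolding p_unit_seq_def
  by (auto intro: p_cauchy_mult elim: eventually_elim2 simp: rat_pnorm_mult)

lemma p_unit_seq_divide:
  assumes "p_unit_seq p X" "p_unit_seq p Y"
  shows "p_unit_seq p (\<lambda>n. X n / Y n)"
proof -
  have "\<forall>\<^sub>F n in sequentially. 1 \<le> rat_pnorm p (Y n)"
    using p_unit_seqD(2)[OF assms(2)] by eventually_elim simp
  then have "p_cauchy p (\<lambda>n. X n * inverse (Y n))"
    using p_unit_seqD(1)[OF assms(1)] p_unit_seqD(1)[OF assms(2)]
    by (intro p_cauchy_mult p_cauchy_inverse) auto
  moreover have "\<forall>\<^sub>F n in sequentially. rat_pnorm p (X n / Y n) = 1"
    using p_unit_seqD(2)[OF assms(1)] p_unit_seqD(2)[OF assms(2)]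
    by eventually_elim (simp add: rat_pnorm_divide)
  ultimately show ?thesis
    unfolding p_unit_seq_def by (simp add: divide_inverse)
qed

end

subsection \<open>The Moebius map on the unit sphere\<close>

definition qp_mobius :: "nat \<Rightarrow> qp \<Rightarrow> qp \<Rightarrow> qp \<Rightarrow> qp" where
  "qp_mobius p b c x = qp_div p x (qp_add p (qp_mult p b x) c)"

lemma mobius_diff:
  fixes b c x y :: "'a :: field"
  assumes "b * x + c \<noteq> 0" "b * y + c \<noteq> 0"
  shows "x / (b * x + c) - y / (b * y + c) = c * (x - y) / ((b * x + c) * (b * y + c))"
  using assms by (simp add: field_simps)

lemma mobius_left_inverse:
  fixes b c z :: "'a :: field"
  assumes "c \<noteq> 0" "1 - b * z \<noteq> 0"
  shows "(c * z / (1 - b * z)) / (b * (c * z / (1 - b * z)) + c) = z"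
proof -
  have "b * (c * z / (1 - b * z)) + c = c / (1 - b * z)"
    using assms by (simp add: field_simps)
  then show ?thesis
    using assms by simp
qed

context padic
begin

lemma rat_pnorm_mobius_denom:
  assumes "rat_pnorm p b < 1" "rat_pnorm p c = 1" "rat_pnorm p x = 1"
  shows "rat_pnorm p (b * x + c) = 1"
  using rat_pnorm_add_eq_left[of "b * x" c] assms by (simp add: rat_pnorm_mult add.commute)

context
  fixes B C :: "nat \<Rightarrow> rat"
  assumes cauchy_B: "p_cauchy p B"
    and small_B: "\<forall>\<^sub>F n in sequentially. rat_pnorm p (B n) < 1"
    and unit_C: "p_unit_seq p C"
begin

lemma p_unit_seq_mobius_denom:
  assumes "p_unit_seq p X"
  shows "p_unit_seq p (\<lambda>n. B n * X n + C n)"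
proof -
  have "\<forall>\<^sub>F n in sequentially. rat_pnorm p (B n * X n + C n) = 1"
    using small_B p_unit_seqD(2)[OF unit_C] p_unit_seqD(2)[OF assms]
    by eventually_elim (rule rat_pnorm_mobius_denom)
  moreover have "p_cauchy p (\<lambda>n. B n * X n + C n)"
    using cauchy_B p_unit_seqD(1)[OF unit_C] p_unit_seqD(1)[OF assms]
    by (intro p_cauchy_add p_cauchy_mult)
  ultimately show ?thesis
    unfolding p_unit_seq_def by simp
qed

lemma qp_mobius_of_seq:
  assumes "p_unit_seq p X"
  shows "qp_mobius p (qp_of_seq p B) (qp_of_seq p C) (qp_of_seq p X)
    = qp_of_seq p (\<lambda>n. X n / (B n * X n + C n))"
proof -
  have X: "p_cauchy p X"
    using assms by (rule p_unit_seqD)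
  have denom: "p_unit_seq p (\<lambda>n. B n * X n + C n)"
    using assms by (rule p_unit_seq_mobius_denom)
  have "qp_add p (qp_mult p (qp_of_seq p B) (qp_of_seq p X)) (qp_of_seq p C)
      = qp_of_seq p (\<lambda>n. B n * X n + C n)"
    using cauchy_B X p_unit_seqD(1)[OF unit_C]
    by (simp add: qp_mult_of_seq qp_add_of_seq p_cauchy_mult)
  moreover have "\<forall>\<^sub>F n in sequentially. 1 \<le> rat_pnorm p (B n * X n + C n)"
    using p_unit_seqD(2)[OF denom] by eventually_elim simp
  ultimately show ?thesis
    unfolding qp_mobius_def using X p_unit_seqD(1)[OF denom]
    by (simp add: qp_div_of_seq[OF _ _ zero_less_one])
qed

lemma p_unit_seq_mobius:
  "p_unit_seq p X \<Longrightarrow> p_unit_seq p (\<lambda>n. X n / (B n * X n + C n))"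
  by (intro p_unit_seq_divide p_unit_seq_mobius_denom)

lemma eventually_rat_pnorm_mobius_diff:
  assumes "p_unit_seq p X" "p_unit_seq p Y"
  shows "\<forall>\<^sub>F n in sequentially.
    rat_pnorm p (X n / (B n * X n + C n) - Y n / (B n * Y n + C n)) = rat_pnorm p (X n - Y n)"
  using p_unit_seqD(2)[OF unit_C] p_unit_seqD(2)[OF p_unit_seq_mobius_denom[OF assms(1)]]
    p_unit_seqD(2)[OF p_unit_seq_mobius_denom[OF assms(2)]]
proof eventually_elim
  case (elim n)
  then have "B n * X n + C n \<noteq> 0" "B n * Y n + C n \<noteq> 0"
    by auto
  then show ?case
    using elim by (simp add: mobius_diff rat_pnorm_mult rat_pnorm_divide)
qed

lemma p_unit_seq_mobius_preimage:
  assumes "p_unit_seq p Z"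
  shows "p_unit_seq p (\<lambda>n. C n * Z n / (1 - B n * Z n))"
    and "\<forall>\<^sub>F n in sequentially.
      (C n * Z n / (1 - B n * Z n)) / (B n * (C n * Z n / (1 - B n * Z n)) + C n) = Z n"
proof -
  have "\<forall>\<^sub>F n in sequentially. rat_pnorm p (1 - B n * Z n) = 1"
    using small_B p_unit_seqD(2)[OF assms]
  proof eventually_elim
    case (elim n)
    then have "rat_pnorm p (- B n * Z n + 1) = 1"
      by (intro rat_pnorm_mobius_denom) simp_all
    then show ?case
      by simp
  qed
  moreover have "p_cauchy p (\<lambda>n. 1 - B n * Z n)"
    using cauchy_B p_unit_seqD(1)[OF assms]
    by (intro p_cauchy_diff p_cauchy_const p_cauchy_mult)
  ultimately have denom: "p_unit_seq p (\<lambda>n. 1 - B n * Z n)"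
    unfolding p_unit_seq_def by simp
  have "p_unit_seq p (\<lambda>n. C n * Z n)"
    using unit_C assms by (rule p_unit_seq_mult)
  then show "p_unit_seq p (\<lambda>n. C n * Z n / (1 - B n * Z n))"
    using denom by (rule p_unit_seq_divide)
  show "\<forall>\<^sub>F n in sequentially.
      (C n * Z n / (1 - B n * Z n)) / (B n * (C n * Z n / (1 - B n * Z n)) + C n) = Z n"
    using p_unit_seqD(2)[OF unit_C] p_unit_seqD(2)[OF denom]
    by eventually_elim (rule mobius_left_inverse; auto)
qed

end

context
  fixes b c :: qp
  assumes b: "b \<in> Qp p" "qp_norm p b < 1"
    and c: "c \<in> qp_unit_sphere p"
begin

lemma mobius_coefficient_seqs:
  obtains B C where "p_cauchy p B" "\<forall>\<^sub>F n in sequentially. rat_pnorm p (B n) < 1" "p_unit_seq p C"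
    "b = qp_of_seq p B" "c = qp_of_seq p C"
  using qp_norm_less_1E[OF b] c unfolding qp_unit_sphere_iff by metis

lemma qp_mobius_unit_sphere:
  assumes "x \<in> qp_unit_sphere p"
  shows "qp_mobius p b c x \<in> qp_unit_sphere p"
proof -
  obtain B C where BC: "p_cauchy p B" "\<forall>\<^sub>F n in sequentially. rat_pnorm p (B n) < 1" "p_unit_seq p C"
    and eq: "b = qp_of_seq p B" "c = qp_of_seq p C"
    by (rule mobius_coefficient_seqs)
  obtain X where X: "p_unit_seq p X" "x = qp_of_seq p X"
    using assms unfolding qp_unit_sphere_iff by blast
  show ?thesis
    unfolding qp_unit_sphere_iff eq X(2) qp_mobius_of_seq[OF BC X(1)]
    using p_unit_seq_mobius[OF BC X(1)] by blast
qed

lemma qp_mobius_isometric: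
  assumes "x \<in> qp_unit_sphere p" "y \<in> qp_unit_sphere p"
  shows "qp_norm p (qp_sub p (qp_mobius p b c x) (qp_mobius p b c y)) = qp_norm p (qp_sub p x y)"
proof -
  obtain B C where BC: "p_cauchy p B" "\<forall>\<^sub>F n in sequentially. rat_pnorm p (B n) < 1" "p_unit_seq p C"
    and eq: "b = qp_of_seq p B" "c = qp_of_seq p C"
    by (rule mobius_coefficient_seqs)
  obtain X Y where X: "p_unit_seq p X" "x = qp_of_seq p X"
    and Y: "p_unit_seq p Y" "y = qp_of_seq p Y"
    using assms unfolding qp_unit_sphere_iff by blast
  define F where "F X n = X n / (B n * X n + C n)" for X :: "nat \<Rightarrow> rat" and n
  have "(\<lambda>n. rat_pnorm p (F X n - F Y n))
      \<longlonglongrightarrow> qp_norm p (qp_sub p (qp_mobius p b c x) (qp_mobius p b c y))"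
    unfolding eq X(2) Y(2) qp_mobius_of_seq[OF BC X(1)] qp_mobius_of_seq[OF BC Y(1)] F_def
    using p_unit_seqD(1)[OF p_unit_seq_mobius[OF BC X(1)]]
      p_unit_seqD(1)[OF p_unit_seq_mobius[OF BC Y(1)]]
    by (rule qp_norm_sub_of_seq)
  moreover have "(\<lambda>n. rat_pnorm p (X n - Y n)) \<longlonglongrightarrow> qp_norm p (qp_sub p x y)"
    unfolding X(2) Y(2) using p_unit_seqD(1)[OF X(1)] p_unit_seqD(1)[OF Y(1)]
    by (rule qp_norm_sub_of_seq)
  then have "(\<lambda>n. rat_pnorm p (F X n - F Y n)) \<longlonglongrightarrow> qp_norm p (qp_sub p x y)"
    unfolding F_def
    by (rule iffD2[OF tendsto_cong[OF eventually_rat_pnorm_mobius_diff[OF BC X(1) Y(1)]]])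
  ultimately show ?thesis
    by (rule LIMSEQ_unique)
qed

lemma qp_unit_sphere_subset_mobius_image: "qp_unit_sphere p \<subseteq> qp_mobius p b c ` qp_unit_sphere p"
proof
  fix z
  assume "z \<in> qp_unit_sphere p"
  then obtain Z where Z: "p_unit_seq p Z" "z = qp_of_seq p Z"
    unfolding qp_unit_sphere_iff by blast
  obtain B C where BC: "p_cauchy p B" "\<forall>\<^sub>F n in sequentially. rat_pnorm p (B n) < 1" "p_unit_seq p C"
    and eq: "b = qp_of_seq p B" "c = qp_of_seq p C"
    by (rule mobius_coefficient_seqs)
  define X where "X n = C n * Z n / (1 - B n * Z n)" for n
  have X: "p_unit_seq p X"
    unfolding X_def using BC Z(1) by (rule p_unit_seq_mobius_preimage(1))
  have "p_equiv p (\<lambda>n. X n / (B n * X n + C n)) Z"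
    using p_unit_seqD(1)[OF p_unit_seq_mobius[OF BC X]] p_unit_seqD(1)[OF Z(1)]
      p_unit_seq_mobius_preimage(2)[OF BC Z(1)]
    unfolding X_def by (rule p_equiv_eventually_eq)
  then have "qp_mobius p b c (qp_of_seq p X) = z"
    unfolding eq Z(2) qp_mobius_of_seq[OF BC X] qp_of_seq_eq_iff[OF p_unit_seqD(1)[OF Z(1)]] .
  moreover have "qp_of_seq p X \<in> qp_unit_sphere p"
    unfolding qp_unit_sphere_iff using X by blast
  ultimately show "z \<in> qp_mobius p b c ` qp_unit_sphere p"
    by blast
qed

lemma qp_mobius_image_ball:
  assumes "a \<in> Qp p" "0 \<le> r" "r < 1" "qp_ball p a r \<subseteq> qp_unit_sphere p"
  shows "qp_mobius p b c ` qp_ball p a r = qp_ball p (qp_mobius p b c a) r"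
proof
  have a: "a \<in> qp_unit_sphere p"
    using qp_center_in_ball[OF assms(1,2)] assms(4) by blast
  show "qp_mobius p b c ` qp_ball p a r \<subseteq> qp_ball p (qp_mobius p b c a) r"
  proof
    fix z
    assume "z \<in> qp_mobius p b c ` qp_ball p a r"
    then obtain x where x: "x \<in> qp_ball p a r" and z: "z = qp_mobius p b c x"
      by blast
    have "x \<in> qp_unit_sphere p"
      using x assms(4) by blast
    then show "z \<in> qp_ball p (qp_mobius p b c a) r"
      using x qp_mobius_unit_sphere qp_mobius_isometric[OF _ a]
      unfolding z qp_ball_def qp_unit_sphere_def by simp
  qed
  show "qp_ball p (qp_mobius p b c a) r \<subseteq> qp_mobius p b c ` qp_ball p a r"
  proof
    fix z
    assume z: "z \<in> qp_ball p (qp_mobius p b c a) r"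
    then have "z \<in> qp_unit_sphere p"
      using qp_ball_subset_unit_sphere[OF qp_mobius_unit_sphere[OF a] assms(3)] by blast
    then obtain x where x: "x \<in> qp_unit_sphere p" and "z = qp_mobius p b c x"
      using qp_unit_sphere_subset_mobius_image by blast
    moreover have "x \<in> qp_ball p a r"
      using z x qp_mobius_isometric[OF x a]
      unfolding \<open>z = qp_mobius p b c x\<close> qp_ball_def qp_unit_sphere_def by simp
    ultimately show "z \<in> qp_mobius p b c ` qp_ball p a r"
      by blast
  qed
qed

end

end

theorem lemma4p1:
  fixes p :: nat and b c a :: qp and l :: nat
  assumes "prime p"
    and "b \<in> Qp p" and "c \<in> Qp p"
    and "qp_norm p c = 1" and "qp_norm p b < 1"
    and "a \<in> Qp p" and "l > 0"
    and "qp_ball p a (real p powr (- real l)) \<subseteq> qp_unit_sphere p"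
  shows "(\<lambda>x. qp_div p x (qp_add p (qp_mult p b x) c)) ` qp_ball p a (real p powr (- real l))
         = qp_ball p (qp_div p a (qp_add p (qp_mult p b a) c)) (real p powr (- real l))"
proof -
  interpret padic p
    by (rule padic.intro) (rule assms(1))
  have "real p powr (- real l) < 1"
    using real_p_gt_1 assms(7) by (intro powr_less_one) auto
  moreover have "c \<in> qp_unit_sphere p"
    using assms(3,4) unfolding qp_unit_sphere_def by simp
  ultimately show ?thesis
    unfolding qp_mobius_def[symmetric]
    using qp_mobius_image_ball[OF assms(2,5) _ assms(6) _ _ assms(8)] by simp
qed

end
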